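(* Let $N=pq$ where $1<p\le q$ are primes (not necessarily distinct), with $N$ odd, let $M=(N-1)/2$, let $r$ be an integer with $0<r\le M$, and let $$L_0=\max\{k=p^{\ell}q^{m} : \ell,m\in\{0,1\},\ k\le r\}.$$ Then for every integer $L$ with $L_0\le L\le M$, the inverse problem $\mathrm{IP}(N,r,L)$ is uniquely solvable; that is, for any two distinct ${\tt x},{\tt y}\in\Omega(N,r)$ there is some $m\in\{1,\dots,L\}$ with $\tilde{x}_m\neq\tilde{y}_m$.
   Context: For a vector ${\tt v}=(v_1,\dots,v_N)$ of odd length $N>1$, its DFT coefficients are $\tilde{v}_m=\sum_{n=1}^N v_n e^{\mathrm{i}\xi m n}$ with $\xi=2\pi/N$. A vector is binary if its entries are $0$ or $1$; $\Omega(N,r)$ is the set of binary vectors of length $N$ with exactly $r$ ones. For $1\le L\le M$, two vectors ${\tt x},{\tt y}\in\Omega(N,r)$ are $L$-distinguishable if $\tilde{x}_m\neq\tilde{y}_m$ for some $m\in\{1,\dots,L\}$. The inverse problem $\mathrm{IP}(N,r,L)$ (recovering ${\tt x}\in\Omega(N,r)$ from $\tilde{x}_1,\dots,\tilde{x}_L$) is uniquely solvable if all pairs of distinct vectors in $\Omega(N,r)$ are $L$-distinguishable. *)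

theory Defs
  imports "HOL-Analysis.Analysis" "HOL-Computational_Algebra.Primes"
begin

text \<open>Vectors of length N are functions on the index set {1..N}; binary vectors take
values 0/1 on {1..N} and (for uniqueness of representation) value 0 outside.\<close>

definition dft :: "nat \<Rightarrow> (nat \<Rightarrow> real) \<Rightarrow> nat \<Rightarrow> complex" where
  "dft N v m = (\<Sum>n=1..N. complex_of_real (v n) * exp (\<i> * complex_of_real (2 * pi / real N) * of_nat m * of_nat n))"

definition Omega :: "nat \<Rightarrow> nat \<Rightarrow> (nat \<Rightarrow> real) set" where
  "Omega N r = {v. (\<forall>n\<in>{1..N}. v n = 0 \<or> v n = 1) \<and> (\<forall>n. n \<notin> {1..N} \<longrightarrow> v n = 0)
                   \<and> card {n\<in>{1..N}. v n = 1} = r}"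

definition L_distinguishable :: "nat \<Rightarrow> nat \<Rightarrow> (nat \<Rightarrow> real) \<Rightarrow> (nat \<Rightarrow> real) \<Rightarrow> bool" where
  "L_distinguishable N L x y = (\<exists>m\<in>{1..L}. dft N x m \<noteq> dft N y m)"

definition uniquely_solvable :: "nat \<Rightarrow> nat \<Rightarrow> nat \<Rightarrow> bool" where
  "uniquely_solvable N r L = (\<forall>x\<in>Omega N r. \<forall>y\<in>Omega N r. x \<noteq> y \<longrightarrow> L_distinguishable N L x y)"

end

theory Submission
  imports Defs "HOL-Computational_Algebra.Polynomial_Factorial" "HOL-Number_Theory.Cong"
begin

(* Let d = x - y, a {-1,0,1}-valued N-periodic vector with sum 0, and D(X) = \<Sum> d_n X^n.
   With \<zeta> = exp(2\<pi>i/N), agreement of the first L DFT coefficients says D(\<zeta>^m) = 0 for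
   1 \<le> m \<le> L.  The roots of an integer polynomial among the roots of unity are closed under
   w \<mapsto> w^k for k coprime to the order of w (the irreducibility argument for cyclotomic
   polynomials), so L \<ge> L_0 forces D(\<zeta>^j) = 0 for j = 0, for all j coprime to N, and for all
   multiples j of p (of q) not divisible by N as soon as p \<le> r (q \<le> r).  Fourier inversion
   then finishes the proof: if q \<le> r, d = 0; if r < q and (p \<le> r or p = q), d is p-periodic,
   so it has at least q > r entries equal to 1; if r < p < q, the second differences
   d(n+s+t) - d(n+s) - d(n+t) + d(n) vanish for p | s and q | t, so by the Chinese remainder
   theorem d(n) = a(n mod p) + b(n mod q), and such a vector has at least p + q - 2 > 2r
   nonzero entries. *)

section \<open>Integer polynomials and the Frobenius congruence\<close>

definition ipoly :: "int poly \<Rightarrow> 'a::comm_ring_1 \<Rightarrow> 'a" where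
  "ipoly P z = poly (map_poly of_int P) z"

lemma map_poly_of_int_add: "map_poly of_int (P + Q) = map_poly of_int P + map_poly of_int Q"
  by (rule poly_eqI) (simp add: coeff_map_poly)

lemma map_poly_of_int_diff: "map_poly of_int (P - Q) = map_poly of_int P - map_poly of_int Q"
  by (rule poly_eqI) (simp add: coeff_map_poly)

lemma map_poly_of_int_mult: "map_poly of_int (P * Q) = map_poly of_int P * map_poly of_int Q"
  by (rule poly_eqI) (simp add: coeff_map_poly coeff_mult)

lemma ipoly_add [simp]: "ipoly (P + Q) z = ipoly P z + ipoly Q z"
  by (simp add: ipoly_def map_poly_of_int_add)

lemma ipoly_diff [simp]: "ipoly (P - Q) z = ipoly P z - ipoly Q z"
  by (simp add: ipoly_def map_poly_of_int_diff)

lemma ipoly_mult [simp]: "ipoly (P * Q) z = ipoly P z * ipoly Q z"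
  by (simp add: ipoly_def map_poly_of_int_mult)

lemma ipoly_uminus [simp]: "ipoly (- P) z = - ipoly P z"
  by (metis diff_0 ipoly_diff diff_self)

lemma ipoly_smult [simp]: "ipoly (smult c P) z = of_int c * ipoly P z"
  by (simp add: ipoly_def map_poly_smult)

lemma ipoly_pCons [simp]: "ipoly (pCons a P) z = of_int a + z * ipoly P z"
  by (simp add: ipoly_def map_poly_pCons)

lemma ipoly_0 [simp]: "ipoly 0 z = 0"
  by (simp add: ipoly_def)

lemma ipoly_1 [simp]: "ipoly 1 z = 1"
  by (simp add: ipoly_def)

lemma ipoly_of_nat [simp]: "ipoly (of_nat n) z = of_nat n"
  by (simp add: of_nat_poly)

lemma ipoly_monom [simp]: "ipoly (monom c n) z = of_int c * z ^ n"
  by (simp add: ipoly_def map_poly_monom poly_monom)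

lemma ipoly_power [simp]: "ipoly (P ^ k) z = ipoly P z ^ k"
  by (induction k) simp_all

lemma ipoly_sum [simp]: "ipoly (\<Sum>a\<in>A. F a) z = (\<Sum>a\<in>A. ipoly (F a) z)"
  by (induction A rule: infinite_finite_induct) simp_all

lemma ipoly_pcompose [simp]: "ipoly (pcompose P Q) z = ipoly P (ipoly Q z)"
  by (induction P) (simp_all add: pcompose_pCons)

lemma ipoly_primitive_part_eq_0:
  fixes w :: "'a::{idom,ring_char_0}"
  assumes "ipoly P w = 0"
  shows "ipoly (primitive_part P) w = 0"
proof (cases "P = 0")
  case False
  have "ipoly P w = of_int (content P) * ipoly (primitive_part P) w"
    by (metis content_times_primitive_part ipoly_smult)
  then show ?thesis using assms False by simp
qed simp

lemma freshmans_dream_dvd: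
  fixes a b :: "'a::comm_ring_1"
  assumes "prime l"
  shows "of_nat l dvd (a + b) ^ l - a ^ l - b ^ l"
proof -
  have l: "l \<ge> 2" using assms prime_ge_2_nat by blast
  have "(a + b) ^ l = (\<Sum>k\<in>insert 0 (insert l {1..<l}). of_nat (l choose k) * a ^ k * b ^ (l - k))"
    using l by (subst binomial_ring) (intro sum.cong; auto)
  also have "\<dots> = b ^ l + a ^ l + (\<Sum>k\<in>{1..<l}. of_nat (l choose k) * a ^ k * b ^ (l - k))"
    using l by (subst sum.insert; simp)+
  finally have "(a + b) ^ l - a ^ l - b ^ l = (\<Sum>k\<in>{1..<l}. of_nat (l choose k) * a ^ k * b ^ (l - k))"
    by (simp add: algebra_simps)
  also have "of_nat l dvd \<dots>"
  proof (intro dvd_sum dvd_mult2)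
    fix k assume "k \<in> {1..<l}"
    then have "l dvd l choose k" using dvd_choose_prime[of k l] assms by auto
    then show "of_nat l dvd (of_nat (l choose k) :: 'a)" by (metis dvd_def of_nat_mult)
  qed
  finally show ?thesis .
qed

lemma fermat_little_int_dvd:
  fixes c :: int
  assumes "prime l"
  shows "int l dvd c ^ l - c"
proof (induction c rule: int_induct[where k = 0])
  case base
  show ?case using prime_gt_0_nat[OF assms] by (simp add: zero_power)
next
  case (step1 c)
  have "(c + 1) ^ l - (c + 1) = ((c + 1) ^ l - c ^ l - 1 ^ l) + (c ^ l - c)" by simp
  then show ?case using freshmans_dream_dvd[OF assms, of c 1] step1.IH by (metis dvd_add)
next
  case (step2 c)
  have "(c - 1) ^ l - (c - 1) = (c ^ l - c) - ((c - 1 + 1) ^ l - (c - 1) ^ l - 1 ^ l)" by simp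
  then show ?case using freshmans_dream_dvd[OF assms, of "c - 1" 1] step2.IH by (metis dvd_diff)
qed

lemma frobenius_int_poly_dvd:
  fixes P :: "int poly"
  assumes "prime l"
  shows "of_nat l dvd P ^ l - pcompose P (monom 1 l)"
proof (induction P)
  case 0
  show ?case using prime_gt_0_nat[OF assms] by (simp add: zero_power)
next
  case (pCons a P)
  define X where "X = [:0, 1 :: int:]"
  have X_l: "X ^ l = monom 1 l" by (simp add: X_def monom_altdef)
  have pCons_eq: "pCons a P = [:a:] + X * P" by (simp add: X_def)
  have const_term: "of_nat l dvd [:a:] ^ l - [:a:]"
  proof -
    obtain k where "a ^ l - a = int l * k" using fermat_little_int_dvd[OF assms] by blast
    then have "[:a:] ^ l - [:a:] = of_nat l * [:k:]" by (simp add: of_nat_poly poly_const_pow)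
    then show ?thesis by (metis dvd_triv_left)
  qed
  have "pCons a P ^ l - pcompose (pCons a P) (monom 1 l)
      = (([:a:] + X * P) ^ l - [:a:] ^ l - (X * P) ^ l) + ([:a:] ^ l - [:a:])
        + X ^ l * (P ^ l - pcompose P (monom 1 l))"
    by (subst (1) pCons_eq) (simp add: pcompose_pCons X_l power_mult_distrib algebra_simps)
  also have "of_nat l dvd \<dots>"
    by (intro dvd_add dvd_mult freshmans_dream_dvd[OF assms] const_term pCons.IH)
  finally show ?case .
qed

lemma ipoly_frobenius:
  assumes "prime l"
  obtains Q where "ipoly P w ^ l - ipoly P (w ^ l) = of_nat l * ipoly Q w"
proof -
  obtain Q where "P ^ l - pcompose P (monom 1 l) = of_nat l * Q"
    using frobenius_int_poly_dvd[OF assms] by blast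
  then have "ipoly (P ^ l - pcompose P (monom 1 l)) w = ipoly (of_nat l * Q) w" by simp
  then show ?thesis using that by simp
qed

section \<open>Roots of integer polynomials among the roots of unity\<close>

definition is_min_int_poly :: "int poly \<Rightarrow> 'a::comm_ring_1 \<Rightarrow> bool" where
  "is_min_int_poly f w \<longleftrightarrow> lead_coeff f = 1 \<and> ipoly f w = 0 \<and> (\<forall>g. ipoly g w = 0 \<longrightarrow> f dvd g)"

lemma is_min_int_polyD:
  assumes "is_min_int_poly f w"
  shows "lead_coeff f = 1" and "ipoly f w = 0" and "ipoly g w = 0 \<Longrightarrow> f dvd g"
  using assms by (auto simp: is_min_int_poly_def)

lemma min_degree_root_dvd_smult:
  fixes w :: "'a::{idom,ring_char_0}"
  assumes f: "ipoly f w = 0" "f \<noteq> 0"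
    and least: "\<And>g. ipoly g w = 0 \<Longrightarrow> g \<noteq> 0 \<Longrightarrow> degree f \<le> degree g"
    and g: "ipoly g w = 0"
  obtains a where "a \<noteq> 0" and "f dvd smult a g"
proof -
  define r where "r = pseudo_mod g f"
  obtain a q where a: "a \<noteq> 0" and aq: "smult a g = f * q + r"
    using pseudo_mod(1)[of f g] f(2) r_def by blast
  have "ipoly r w = 0" using arg_cong[OF aq, of "\<lambda>P. ipoly P w"] f g by simp
  then have "r = 0" using least[of r] pseudo_mod(2)[of f g] f(2) r_def by fastforce
  then show ?thesis using that a aq by auto
qed

lemma primitive_part_dvd_if_dvd_smult:
  fixes f g :: "int poly"
  assumes "f dvd smult a g" and "a \<noteq> 0" and "f \<noteq> 0"
  shows "primitive_part f dvd g"
proof -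
  have "primitive_part f dvd f" by (metis content_times_primitive_part dvd_refl dvd_smult)
  then have "fract_poly (primitive_part f) dvd fract_poly (smult a g)"
    using assms(1) by (intro fract_poly_dvd) (rule dvd_trans)
  then have "fract_poly (primitive_part f) dvd fract_poly g" using assms(2) by (simp add: dvd_smult_iff)
  then show ?thesis using assms(3) by (intro fract_poly_dvdD) simp_all
qed

lemma min_int_poly_exists:
  fixes w :: "'a::{idom,ring_char_0}"
  assumes "lead_coeff G = 1" and "ipoly G w = 0"
  obtains f where "is_min_int_poly f w"
proof -
  have "G \<noteq> 0" using assms(1) by auto
  then obtain f0 where "ipoly f0 w = 0 \<and> f0 \<noteq> 0"
    and "\<forall>g. ipoly g w = 0 \<and> g \<noteq> 0 \<longrightarrow> degree f0 \<le> degree g"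
    using ex_has_least_nat[of "\<lambda>g. ipoly g w = 0 \<and> g \<noteq> 0" G degree] assms(2) by blast
  then have f0: "ipoly f0 w = 0" "f0 \<noteq> 0"
    and least: "\<And>g. ipoly g w = 0 \<Longrightarrow> g \<noteq> 0 \<Longrightarrow> degree f0 \<le> degree g" by auto
  define f1 where "f1 = primitive_part f0"
  have f1_dvd: "f1 dvd g" if g_root: "ipoly g w = 0" for g
  proof -
    obtain a where "a \<noteq> 0" "f0 dvd smult a g"
      using min_degree_root_dvd_smult[OF f0 least g_root] by blast
    then show ?thesis unfolding f1_def using f0(2) by (intro primitive_part_dvd_if_dvd_smult)
  qed
  define u where "u = lead_coeff f1"
  obtain h where "G = f1 * h" using f1_dvd[OF assms(2)] by blast
  then have "u * lead_coeff h = 1" using assms(1) by (simp add: u_def lead_coeff_mult)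
  then have u: "u * u = 1" by (auto simp: zmult_eq_1_iff)
  have "f1 = smult u f1 * [:u:]" using u by (simp add: mult.commute)
  then have "smult u f1 dvd f1" by (rule dvdI)
  then have "smult u f1 dvd g" if "ipoly g w = 0" for g using f1_dvd[OF that] by (rule dvd_trans)
  moreover have "lead_coeff (smult u f1) = 1" using u by (cases "f1 = 0") (simp_all add: u_def)
  moreover have "ipoly (smult u f1) w = 0"
    using ipoly_primitive_part_eq_0[OF f0(1)] by (simp add: f1_def)
  ultimately have "is_min_int_poly (smult u f1) w" by (simp add: is_min_int_poly_def)
  then show ?thesis by (rule that)
qed

lemma min_int_poly_dvd_of_int:
  fixes w :: "'a::{idom,ring_char_0}"
  assumes f: "is_min_int_poly f w" and c: "of_int c = of_int l * ipoly P w"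
  shows "l dvd c"
proof -
  note f_monic = is_min_int_polyD(1)[OF f] and f_root = is_min_int_polyD(2)[OF f]
    and f_dvd = is_min_int_polyD(3)[OF f]
  have "f \<noteq> 0" using f_monic by auto
  obtain q r where "pseudo_divmod P f = (q, r)" by fastforce
  with pseudo_divmod[OF \<open>f \<noteq> 0\<close>] f_monic
  have qr: "P = f * q + r" and r: "r = 0 \<or> degree r < degree f" by auto
  have "degree f \<noteq> 0"
  proof
    assume "degree f = 0"
    then obtain a where "f = [:a:]" by (rule degree_eq_zeroE)
    then show False using f_monic f_root by simp
  qed
  define E where "E = [:c:] - smult l r"
  have "ipoly E w = 0" using c f_root by (simp add: E_def qr)
  then have "f dvd E" by (rule f_dvd)
  moreover have "degree E \<le> degree r"
    unfolding E_def by (intro degree_diff_le) (simp_all add: degree_smult_le)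
  then have "degree E < degree f" using r \<open>degree f \<noteq> 0\<close> by auto
  ultimately have "E = 0" using dvd_imp_degree_le leD by blast
  then have "coeff E 0 = 0" by simp
  then show ?thesis by (simp add: E_def)
qed

(* Write X^M - 1 = f h.  If f(w^l) \<noteq> 0 then h(w^l) = 0, and differentiating gives
   M = w^l f(w^l) h'(w^l).  By the Frobenius congruence f(w^l) \<equiv> f(w)^l = 0 modulo l,
   so M \<in> l \<int>[w], whence l divides M. *)
lemma min_int_poly_root_power_prime:
  fixes w :: "'a::{idom,ring_char_0}"
  assumes f: "is_min_int_poly f w" and w: "w ^ M = 1" and l: "prime l" "\<not> l dvd M"
  shows "ipoly f (w ^ l) = 0"
proof (rule ccontr)
  define u where "u = w ^ l"
  assume fu: "ipoly f (w ^ l) \<noteq> 0"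
  have "M > 0" using l(2) by (rule contrapos_np) simp
  have "ipoly (monom 1 M - 1) w = 0" using w by simp
  then obtain h where fh: "monom 1 M - 1 = f * h" using is_min_int_polyD(3)[OF f] by blast
  have "u ^ M = (w ^ M) ^ l" unfolding u_def by (metis power_mult mult.commute)
  then have "u ^ M = 1" using w by simp
  then have "ipoly f u * ipoly h u = 0" using arg_cong[OF fh, of "\<lambda>P. ipoly P u"] by simp
  then have "ipoly h u = 0" using fu by (simp add: u_def)
  then have "ipoly (pderiv (monom 1 M - 1)) u = ipoly f u * ipoly (pderiv h) u"
    unfolding fh pderiv_mult by simp
  then have deriv: "of_nat M * u ^ (M - 1) = ipoly f u * ipoly (pderiv h) u"
    by (simp add: pderiv_diff pderiv_monom)
  obtain Q where "ipoly f w ^ l - ipoly f u = of_nat l * ipoly Q w"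
    using ipoly_frobenius[OF l(1)] unfolding u_def by blast
  then have f_u: "ipoly f u = - (of_nat l * ipoly Q w)"
    using is_min_int_polyD(2)[OF f] prime_gt_0_nat[OF l(1)] by (simp add: zero_power) (metis minus_minus)
  have "u ^ (M - 1) * u = 1" using power_minus_mult[OF \<open>M > 0\<close>, of u] \<open>u ^ M = 1\<close> by simp
  then have "of_int (int M) = of_nat M * u ^ (M - 1) * u" by (simp add: mult.assoc)
  also have "\<dots> = of_int (int l) * ipoly (- (Q * pcompose (pderiv h) (monom 1 l) * monom 1 l)) w"
    unfolding deriv f_u by (simp add: u_def)
  finally have "int l dvd int M" by (rule min_int_poly_dvd_of_int[OF f])
  then show False using l(2) by simp
qed

lemma ipoly_root_power_prime:
  fixes w :: "'a::{idom,ring_char_0}"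
  assumes w: "w ^ M = 1" and l: "prime l" "\<not> l dvd M" and D: "ipoly D w = 0"
  shows "ipoly D (w ^ l) = 0"
proof -
  have "M > 0" using l(2) by (rule contrapos_np) simp
  then have "lead_coeff (monom 1 M - 1 :: int poly) = 1"
    using lead_coeff_add_le[of "- 1" "monom 1 M"] by (simp add: degree_monom_eq)
  moreover have "ipoly (monom 1 M - 1) w = 0" using w by simp
  ultimately obtain f where f: "is_min_int_poly f w" by (rule min_int_poly_exists)
  then obtain q where "D = f * q" using is_min_int_polyD(3)[OF f D] by blast
  then show ?thesis using min_int_poly_root_power_prime[OF f w l] by simp
qed

lemma ipoly_root_power_coprime:
  fixes w :: "'a::{idom,ring_char_0}"
  assumes w: "w ^ M = 1" and D: "ipoly D w = 0"
  shows "coprime k M \<Longrightarrow> ipoly D (w ^ k) = 0"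
proof (induction k rule: less_induct)
  case (less k)
  consider "k = 0" | "k = 1" | l k' where "prime l" "k = l * k'" "k' < k"
  proof (cases "k \<le> 1")
    case True
    then show ?thesis using that(1,2) by linarith
  next
    case False
    then obtain l where l: "prime l" "l dvd k" using prime_factor_nat[of k] by auto
    then obtain k' where "k = l * k'" by blast
    moreover have "k' < k" using prime_gt_1_nat[OF l(1)] False calculation by (cases "k' = 0") auto
    ultimately show ?thesis using that(3) l(1) by blast
  qed
  then show ?case
  proof cases
    case 1
    then have "w = 1" using less.prems w by simp
    then show ?thesis using D 1 by simp
  next
    case 2
    then show ?thesis using D by simp
  next
    case (3 l k')
    have "coprime k' M" and "\<not> l dvd M"
      using less.prems 3(1,2) by (auto simp: coprime_absorb_left not_prime_unit)
    have "(w ^ k') ^ M = 1" using w by (metis mult.commute power_mult power_one)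
    then have "ipoly D ((w ^ k') ^ l) = 0"
      using ipoly_root_power_prime \<open>prime l\<close> \<open>\<not> l dvd M\<close> less.IH[OF 3(3) \<open>coprime k' M\<close>] by blast
    then show ?thesis using 3 by (simp add: power_mult mult.commute)
  qed
qed

section \<open>Discrete Fourier analysis on the integers modulo N\<close>

definition zeta :: "nat \<Rightarrow> complex" where
  "zeta N = exp (2 * of_real pi * \<i> / of_nat N)"

lemma zeta_power: "zeta N ^ k = exp (2 * of_real pi * \<i> * of_nat k / of_nat N)"
  unfolding zeta_def exp_of_nat_mult[symmetric] by (simp add: field_simps)

lemma zeta_power_eq_iff: "N > 0 \<Longrightarrow> zeta N ^ a = zeta N ^ b \<longleftrightarrow> a mod N = b mod N"
  unfolding zeta_power by (rule complex_root_unity_eq) simp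

lemma zeta_power_eq_1_iff: "N > 0 \<Longrightarrow> zeta N ^ k = 1 \<longleftrightarrow> N dvd k"
  unfolding zeta_power by (rule complex_root_unity_eq_1) simp

lemma zeta_nonzero [simp]: "zeta N \<noteq> 0"
  by (simp add: zeta_def)

lemma zeta_power_shift:
  assumes "N > 0" and "N dvd j * s"
  shows "zeta N ^ (j * (n + s)) = zeta N ^ (j * n)"
  using assms by (auto simp: zeta_power_eq_iff distrib_left elim!: dvdE)

lemma sum_powers_root_of_unity:
  fixes x :: "'a::field"
  assumes "x ^ N = 1"
  shows "(\<Sum>j<N. x ^ j) = (if x = 1 then of_nat N else 0)"
  using assms by (simp add: geometric_sum)

definition fourier :: "nat \<Rightarrow> (nat \<Rightarrow> int) \<Rightarrow> nat \<Rightarrow> complex" where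
  "fourier N g m = (\<Sum>n<N. of_int (g n) * zeta N ^ (m * n))"

lemma fourier_inversion:
  assumes N: "N > 0" and g: "\<And>n. g (n mod N) = g n"
  shows "of_nat N * of_int (g n) = (\<Sum>j<N. fourier N g j / zeta N ^ (j * n))"
proof -
  have "(\<Sum>j<N. fourier N g j / zeta N ^ (j * n))
      = (\<Sum>k<N. of_int (g k) * (\<Sum>j<N. zeta N ^ (j * k) / zeta N ^ (j * n)))"
    unfolding fourier_def sum_divide_distrib sum_distrib_left
    by (subst sum.swap) (simp add: mult.assoc)
  also have "\<dots> = (\<Sum>k<N. of_int (g k) * (\<Sum>j<N. (zeta N ^ k / zeta N ^ n) ^ j))"
    by (simp add: power_divide power_mult[symmetric] mult.commute)
  also have "\<dots> = (\<Sum>k<N. of_int (g k) * (if k = n mod N then of_nat N else 0))"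
  proof (intro sum.cong refl)
    fix k assume "k \<in> {..<N}"
    have "(zeta N ^ k / zeta N ^ n) ^ N = (zeta N ^ N) ^ k / (zeta N ^ N) ^ n"
      by (simp only: power_divide power_mult[symmetric] mult.commute)
    then have "(zeta N ^ k / zeta N ^ n) ^ N = 1" using zeta_power_eq_1_iff[OF N, of N] by simp
    moreover have "zeta N ^ k / zeta N ^ n = 1 \<longleftrightarrow> k = n mod N"
      using zeta_power_eq_iff[OF N, of k n] \<open>k \<in> {..<N}\<close> by simp
    ultimately show "of_int (g k) * (\<Sum>j<N. (zeta N ^ k / zeta N ^ n) ^ j)
        = of_int (g k) * (if k = n mod N then of_nat N else 0)"
      by (simp add: sum_powers_root_of_unity)
  qed
  also have "\<dots> = of_nat N * of_int (g n)"
    using N g by (simp add: if_distrib sum.delta mult.commute cong: if_cong)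
  finally show ?thesis ..
qed

lemma sum_atLeast1_atMost_eq_sum_lessThan:
  fixes h :: "nat \<Rightarrow> 'a::comm_monoid_add"
  assumes "h N = h 0"
  shows "(\<Sum>k = 1..N. h k) = (\<Sum>k<N. h k)"
proof (cases N)
  case (Suc M)
  have "(\<Sum>k = 1..N. h k) = (\<Sum>k<M. h (Suc k)) + h N"
    by (simp add: Suc sum.atLeast1_atMost_eq del: sum.lessThan_Suc_shift)
  also have "\<dots> = (\<Sum>k<N. h k)"
    by (simp only: Suc sum.lessThan_Suc_shift assms[unfolded Suc] add.commute)
  finally show ?thesis .
qed simp

lemma dft_eq_sum_zeta: "dft N v m = (\<Sum>n = 1..N. of_real (v n) * zeta N ^ (m * n))"
proof -
  have "exp (\<i> * complex_of_real (2 * pi / real N) * of_nat m * of_nat n) = zeta N ^ (m * n)" for n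
    unfolding zeta_power by (rule arg_cong[where f = exp]) (simp add: field_simps)
  then show ?thesis by (simp add: dft_def)
qed

lemma shift_invariant_if_fourier_support:
  assumes N: "N > 0" and g: "\<And>n. g (n mod N) = g n"
    and supp: "\<And>j. j < N \<Longrightarrow> fourier N g j \<noteq> 0 \<Longrightarrow> N dvd j * s"
  shows "g (n + s) = g n"
proof -
  have "of_nat N * of_int (g (n + s)) = (of_nat N * of_int (g n) :: complex)"
    unfolding fourier_inversion[of N g, OF N g]
  proof (intro sum.cong refl)
    fix j assume "j \<in> {..<N}"
    then have "fourier N g j = 0 \<or> zeta N ^ (j * (n + s)) = zeta N ^ (j * n)"
      using supp zeta_power_shift[OF N] by blast
    then show "fourier N g j / zeta N ^ (j * (n + s)) = fourier N g j / zeta N ^ (j * n)" by auto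
  qed
  then show ?thesis using N by simp
qed

lemma second_difference_zero_if_fourier_support:
  assumes N: "N > 0" and g: "\<And>n. g (n mod N) = g n"
    and supp: "\<And>j. j < N \<Longrightarrow> fourier N g j \<noteq> 0 \<Longrightarrow> N dvd j * s \<or> N dvd j * t"
  shows "g (n + s + t) - g (n + s) - g (n + t) + g n = 0"
proof -
  define c where "c j = 1 / zeta N ^ (j * (n + s + t)) - 1 / zeta N ^ (j * (n + s))
    - 1 / zeta N ^ (j * (n + t)) + 1 / zeta N ^ (j * n)" for j
  have "of_nat N * of_int (g (n + s + t) - g (n + s) - g (n + t) + g n) = (\<Sum>j<N. fourier N g j * c j)"
    by (simp add: c_def algebra_simps fourier_inversion[of N g, OF N g] sum.distrib sum_subtractf
        sum_divide_distrib)
  also have "\<dots> = 0"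
  proof (intro sum.neutral ballI)
    fix j assume "j \<in> {..<N}"
    then consider "fourier N g j = 0" | "N dvd j * s" | "N dvd j * t" using supp by blast
    then show "fourier N g j * c j = 0"
    proof cases
      case 2
      then show ?thesis
        using zeta_power_shift[OF N 2, of n] zeta_power_shift[OF N 2, of "n + t"] by (simp add: c_def ac_simps)
    next
      case 3
      then show ?thesis
        using zeta_power_shift[OF N 3, of n] zeta_power_shift[OF N 3, of "n + s"] by (simp add: c_def ac_simps)
    qed simp
  qed
  finally show ?thesis using N by (simp only: mult_eq_0_iff of_nat_eq_0_iff of_int_eq_0_iff) simp
qed

lemma fourier_eq_ipoly: "fourier N g m = ipoly (\<Sum>n<N. monom (g n) n) (zeta N ^ m)"
  unfolding fourier_def by (simp add: power_mult)

lemma fourier_zero_mult_coprime: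
  assumes "fourier N g m = 0" and "(zeta N ^ m) ^ M = 1" and "coprime k M"
  shows "fourier N g (m * k) = 0"
proof -
  have "ipoly (\<Sum>n<N. monom (g n) n) ((zeta N ^ m) ^ k) = 0"
    using assms(1) unfolding fourier_eq_ipoly by (intro ipoly_root_power_coprime[OF assms(2) _ assms(3)])
  then show ?thesis unfolding fourier_eq_ipoly by (simp only: power_mult)
qed

section \<open>Counting arguments for vectors with vanishing Fourier coefficients\<close>

lemma card_level_set_ge_if_shift_invariant:
  fixes g :: "nat \<Rightarrow> int" and p q :: nat
  assumes N: "N = p * q" and p: "p > 0" and g: "\<And>n. g (n mod N) = g n"
    and shift: "\<And>n. g (n + p) = g n" and n0: "g n0 = c"
  shows "q \<le> card {n. n < N \<and> g n = c}"
proof (cases "q = 0")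
  case False
  have shift_mult: "g (n + k * p) = g n" for n k
  proof (induction k)
    case (Suc k)
    have "n + Suc k * p = (n + k * p) + p" by simp
    then show ?case using Suc shift by metis
  qed simp
  define F where "F k = (n0 + k * p) mod N" for k
  have "inj_on F {..<q}"
  proof (rule inj_onI)
    fix k k' assume k: "k \<in> {..<q}" "k' \<in> {..<q}" and "F k = F k'"
    then have "[n0 + k * p = n0 + k' * p] (mod q * p)" by (simp add: F_def N cong_def mult.commute)
    then have "[k * p = k' * p] (mod q * p)" by (simp only: cong_add_lcancel_nat)
    then show "k = k'" using k p by (simp add: cong_def mod_mult_mult2)
  qed
  moreover have "N > 0" using N p False by simp
  then have "F ` {..<q} \<subseteq> {n. n < N \<and> g n = c}"
    by (auto simp: F_def g shift_mult n0)
  ultimately show ?thesis using card_inj_on_le[of F "{..<q}"] by fastforce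
qed simp

lemma bij_betw_residues:
  fixes p q :: nat
  assumes "coprime p q"
  shows "bij_betw (\<lambda>n. (n mod p, n mod q)) {..<p * q} ({..<p} \<times> {..<q})"
proof -
  have inj: "inj_on (\<lambda>n. (n mod p, n mod q)) {..<p * q}"
  proof (rule inj_onI)
    fix a b assume "a \<in> {..<p * q}" "b \<in> {..<p * q}" "(a mod p, a mod q) = (b mod p, b mod q)"
    then show "a = b"
      using coprime_cong_mult_nat[OF _ _ assms, of a b] by (simp add: cong_def)
  qed
  moreover have "(\<lambda>n. (n mod p, n mod q)) ` {..<p * q} = {..<p} \<times> {..<q}"
  proof (rule card_subset_eq)
    show "(\<lambda>n. (n mod p, n mod q)) ` {..<p * q} \<subseteq> {..<p} \<times> {..<q}"
    proof clarsimp
      fix n assume "n < p * q"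
      then have "p > 0" "q > 0" by (auto intro: gr0I)
      then show "n mod p < p \<and> n mod q < q" by simp
    qed
  qed (use inj in \<open>simp_all add: card_image card_cartesian_product\<close>)
  ultimately show ?thesis by (simp add: bij_betw_def)
qed

definition crt_point :: "nat \<Rightarrow> nat \<Rightarrow> nat \<Rightarrow> nat \<Rightarrow> nat" where
  "crt_point p q i j = the_inv_into {..<p * q} (\<lambda>n. (n mod p, n mod q)) (i, j)"

lemma crt_point:
  assumes "coprime p q" and "i < p" and "j < q"
  shows "crt_point p q i j < p * q" and "crt_point p q i j mod p = i" and "crt_point p q i j mod q = j"
proof -
  note bij = bij_betw_residues[OF assms(1)]
  have "(i, j) \<in> (\<lambda>n. (n mod p, n mod q)) ` {..<p * q}"
    using bij_betw_imp_surj_on[OF bij] assms(2,3) by simp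
  then show "crt_point p q i j < p * q" "crt_point p q i j mod p = i" "crt_point p q i j mod q = j"
    using the_inv_into_into[OF bij_betw_imp_inj_on[OF bij], of "(i, j)"]
      f_the_inv_into_f[OF bij_betw_imp_inj_on[OF bij], of "(i, j)"]
    by (auto simp: crt_point_def)
qed

lemma crt_point_residues:
  assumes "coprime p q" and "n < p * q"
  shows "crt_point p q (n mod p) (n mod q) = n"
  using the_inv_into_f_f[OF bij_betw_imp_inj_on[OF bij_betw_residues[OF assms(1)]], of n] assms(2)
  by (simp add: crt_point_def)

lemma card_crt_grid:
  assumes "coprime p q"
  shows "card {(i, j). i < p \<and> j < q \<and> P (crt_point p q i j)} = card {n. n < p * q \<and> P n}"
proof -
  have "bij_betw (\<lambda>n. (n mod p, n mod q)) {n. n < p * q \<and> P n}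
      {(i, j). i < p \<and> j < q \<and> P (crt_point p q i j)}"
    using bij_betw_apply[OF bij_betw_residues[OF assms]]
    by (intro bij_betw_byWitness[where f' = "\<lambda>(i, j). crt_point p q i j"])
      (auto simp: crt_point[OF assms] crt_point_residues[OF assms])
  then show ?thesis by (simp add: bij_betw_same_card)
qed

(* The shifts s \<equiv> c - a and t \<equiv> d - a are multiples of p and q, and a + s + t \<equiv> b. *)
lemma exchange_if_second_difference_zero:
  fixes g :: "nat \<Rightarrow> int" and p q :: nat
  assumes N: "N = p * q" and pq: "coprime p q" and g: "\<And>n. g (n mod N) = g n"
    and second_diff: "\<And>n s t. p dvd s \<Longrightarrow> q dvd t \<Longrightarrow> g (n + s + t) - g (n + s) - g (n + t) + g n = 0"
    and a: "a < N"
    and res: "a mod p = c mod p" "b mod p = d mod p" "a mod q = d mod q" "b mod q = c mod q"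
  shows "g a + g b = g c + g d"
proof -
  define s where "s = c + N - a"
  define t where "t = d + N - a"
  have as: "a + s = c + N" and at: "a + t = d + N" using a by (simp_all add: s_def t_def)
  have "(a + s) mod p = a mod p" using res(1) by (simp add: as N)
  then obtain x where x: "s = p * x" using mod_eq_dvd_iff_nat[of a "a + s" p] by auto
  have "(a + t) mod q = a mod q" using res(3) by (simp add: at N)
  then obtain y where y: "t = q * y" using mod_eq_dvd_iff_nat[of a "a + t" q] by auto
  have "a + s + t = (d + N) + p * x" using x at by simp
  then have "(a + s + t) mod p = b mod p" using res(2) by (simp add: N)
  moreover have "a + s + t = (c + N) + q * y" using y as by simp
  then have "(a + s + t) mod q = b mod q" using res(4) by (simp add: N)
  ultimately have "(a + s + t) mod N = b mod N"
    using coprime_cong_mult_nat[OF _ _ pq, of "a + s + t" b] by (simp add: cong_def N)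
  then have "g (a + s + t) = g b" using g by metis
  moreover have "g (a + s) = g c" and "g (a + t) = g d" using g unfolding as at by (metis mod_add_self2)+
  moreover have "g (a + s + t) - g (a + s) - g (a + t) + g a = 0" using second_diff x y by simp
  ultimately show ?thesis by simp
qed

(* The exchange property means G i j = a i + b j. *)
lemma exchange_grid_sign_pattern:
  fixes G :: "nat \<Rightarrow> nat \<Rightarrow> int" and p q :: nat
  defines "R \<equiv> {i. i < p \<and> (\<exists>j<q. G i j = 1)}" and "C \<equiv> {j. j < q \<and> (\<exists>i<p. G i j = 1)}"
  assumes exchange: "\<And>i i' j j'. i < p \<Longrightarrow> i' < p \<Longrightarrow> j < q \<Longrightarrow> j' < q \<Longrightarrow>
      G i j + G i' j' = G i j' + G i' j"
    and range: "\<And>i j. G i j \<in> {-1, 0, 1}"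
    and one: "i1 < p" "j1 < q" "G i1 j1 = 1"
    and i0: "i0 < p" "i0 \<notin> R" and j0: "j0 < q" "j0 \<notin> C"
  shows "\<And>i j. i < p \<Longrightarrow> j < q \<Longrightarrow> i \<notin> R \<Longrightarrow> j \<notin> C \<Longrightarrow> G i j = -1"
    and "\<And>i j. i \<in> R \<Longrightarrow> j \<in> C \<Longrightarrow> G i j = 1"
proof -
  have le0: "G i j \<le> 0" if "i < p" "j < q" "i \<notin> R \<or> j \<notin> C" for i j
    using range[of i j] that by (auto simp: R_def C_def)
  show minus: "G i j = -1" if "i < p" "j < q" "i \<notin> R" "j \<notin> C" for i j
    using exchange[OF one(1) that(1) one(2) that(2)] le0[of i1 j] le0[of i j1] one that range[of i j]
    by auto
  have G00: "G i0 j0 = -1" using minus i0 j0 by blast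
  show "G i j = 1" if iR: "i \<in> R" and jC: "j \<in> C" for i j
  proof -
    obtain j' where j': "j' < q" "G i j' = 1" and i: "i < p" using iR by (auto simp: R_def)
    obtain i' where i': "i' < p" "G i' j = 1" and j: "j < q" using jC by (auto simp: C_def)
    have "G i j0 = 0"
      using exchange[OF i i0(1) j'(1) j0(1)] le0[of i j0] le0[of i0 j'] G00 j' i0 j0 i by simp
    moreover have "G i0 j = 0"
      using exchange[OF i'(1) i0(1) j j0(1)] le0[of i' j0] le0[of i0 j] G00 i' i0 j0 j by simp
    ultimately show ?thesis using exchange[OF i i0(1) j j0(1)] G00 by simp
  qed
qed

lemma add_le_two_blocks:
  fixes u v p q :: nat
  assumes "1 \<le> u" "u < p" "1 \<le> v" "v < q"
  shows "p + q \<le> u * v + (p - u) * (q - v) + 2"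
proof -
  obtain a b where "u = Suc a" "v = Suc b" using assms(1,3) by (metis Suc_le_D One_nat_def)
  moreover obtain c d where "p = u + Suc c" "q = v + Suc d"
    using assms(2,4) by (metis less_imp_Suc_add add_Suc_right)
  ultimately show ?thesis by (simp add: algebra_simps)
qed

lemma grid_exchange_card_bound:
  fixes G :: "nat \<Rightarrow> nat \<Rightarrow> int" and p q :: nat
  defines "Ones \<equiv> {(i, j). i < p \<and> j < q \<and> G i j = 1}"
    and "MinusOnes \<equiv> {(i, j). i < p \<and> j < q \<and> G i j = -1}"
  assumes exchange: "\<And>i i' j j'. i < p \<Longrightarrow> i' < p \<Longrightarrow> j < q \<Longrightarrow> j' < q \<Longrightarrow>
      G i j + G i' j' = G i j' + G i' j"
    and range: "\<And>i j. G i j \<in> {-1, 0, 1}"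
    and one: "i1 < p" "j1 < q" "G i1 j1 = 1"
    and small: "card Ones < p" "card Ones < q"
  shows "p + q \<le> card Ones + card MinusOnes + 2"
proof -
  define R where "R = {i. i < p \<and> (\<exists>j<q. G i j = 1)}"
  define C where "C = {j. j < q \<and> (\<exists>i<p. G i j = 1)}"
  have fin: "finite Ones" "finite MinusOnes" "finite R" "finite C"
    unfolding Ones_def MinusOnes_def R_def C_def
    by (auto intro: finite_subset[of _ "{..<p} \<times> {..<q}"])
  have "R \<subseteq> fst ` Ones" "C \<subseteq> snd ` Ones" unfolding R_def C_def Ones_def by force+
  then have "card R < p" "card C < q"
    using small card_image_le[OF fin(1), of fst] card_image_le[OF fin(1), of snd]
      card_mono[OF finite_imageI[OF fin(1)]] by fastforce+
  then have "\<not> {..<p} \<subseteq> R" "\<not> {..<q} \<subseteq> C"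
    using card_mono[OF fin(3), of "{..<p}"] card_mono[OF fin(4), of "{..<q}"] by auto
  then obtain i0 j0 where i0: "i0 < p" "i0 \<notin> R" and j0: "j0 < q" "j0 \<notin> C" by auto
  note signs = exchange_grid_sign_pattern[where G = G, OF exchange range one
      i0(1) i0(2)[unfolded R_def] j0(1) j0(2)[unfolded C_def], folded R_def C_def]
  have "R \<times> C \<subseteq> Ones" using signs(2) by (auto simp: Ones_def R_def C_def)
  then have "card R * card C \<le> card Ones" using fin by (metis card_cartesian_product card_mono)
  moreover
  have "({..<p} - R) \<times> ({..<q} - C) \<subseteq> MinusOnes" using signs(1) by (auto simp: MinusOnes_def)
  moreover have "card ({..<p} - R) = p - card R" "card ({..<q} - C) = q - card C"
    using fin(3,4) by (subst card_Diff_subset; auto simp: R_def C_def)+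
  ultimately have "card R * card C + (p - card R) * (q - card C) \<le> card Ones + card MinusOnes"
    using card_mono[OF fin(2)] by (metis add_mono card_cartesian_product)
  moreover have "1 \<le> card R" "1 \<le> card C"
    using one fin(3,4) by (auto simp: R_def C_def Suc_le_eq card_gt_0_iff)
  ultimately show ?thesis using add_le_two_blocks[of "card R" p "card C" q] \<open>card R < p\<close> \<open>card C < q\<close>
    by linarith
qed

lemma second_difference_card_bound:
  fixes g :: "nat \<Rightarrow> int" and p q :: nat
  assumes N: "N = p * q" and pq: "coprime p q" and g: "\<And>n. g (n mod N) = g n"
    and second_diff: "\<And>n s t. p dvd s \<Longrightarrow> q dvd t \<Longrightarrow> g (n + s + t) - g (n + s) - g (n + t) + g n = 0"
    and range: "\<And>n. g n \<in> {-1, 0, 1}"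
    and one: "n1 < N" "g n1 = 1"
    and small: "card {n. n < N \<and> g n = 1} < p" "card {n. n < N \<and> g n = 1} < q"
  shows "p + q \<le> card {n. n < N \<and> g n = 1} + card {n. n < N \<and> g n = -1} + 2"
proof -
  define G where "G i j = g (crt_point p q i j)" for i j
  have exchange: "G i j + G i' j' = G i j' + G i' j" if "i < p" "i' < p" "j < q" "j' < q" for i i' j j'
    unfolding G_def
    by (rule exchange_if_second_difference_zero[OF N pq g second_diff])
      (simp_all add: crt_point[OF pq] that N)
  have G_one: "G (n1 mod p) (n1 mod q) = 1"
    using crt_point_residues[OF pq] one by (simp add: G_def N)
  have level_card: "card {(i, j). i < p \<and> j < q \<and> G i j = c} = card {n. n < N \<and> g n = c}" for c
    unfolding G_def N by (rule card_crt_grid[OF pq])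
  have "p > 0" "q > 0" using one(1) N by (auto intro: gr0I)
  have "p + q \<le> card {(i, j). i < p \<and> j < q \<and> G i j = 1} + card {(i, j). i < p \<and> j < q \<and> G i j = -1} + 2"
  proof (rule grid_exchange_card_bound)
    show "G i j + G i' j' = G i j' + G i' j" if "i < p" "i' < p" "j < q" "j' < q" for i i' j j'
      using that by (rule exchange)
    show "G i j \<in> {-1, 0, 1}" for i j unfolding G_def by (rule range)
    show "n1 mod p < p" "n1 mod q < q" "G (n1 mod p) (n1 mod q) = 1"
      using \<open>p > 0\<close> \<open>q > 0\<close> G_one by simp_all
    show "card {(i, j). i < p \<and> j < q \<and> G i j = 1} < p" "card {(i, j). i < p \<and> j < q \<and> G i j = 1} < q"
      using small by (simp_all add: level_card)
  qed
  then show ?thesis by (simp only: level_card)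
qed

section \<open>Binary vectors\<close>

(* The DFT indexes vectors by 1..N; cyc_index N n is the representative of n mod N in
   {1..N}, so that binary_diff N x y is the N-periodic extension of x - y. *)
definition cyc_index :: "nat \<Rightarrow> nat \<Rightarrow> nat" where
  "cyc_index N n = (if n mod N = 0 then N else n mod N)"

definition binary_diff :: "nat \<Rightarrow> (nat \<Rightarrow> real) \<Rightarrow> (nat \<Rightarrow> real) \<Rightarrow> nat \<Rightarrow> int" where
  "binary_diff N x y n = of_bool (x (cyc_index N n) = 1) - of_bool (y (cyc_index N n) = 1)"

lemma Omega_values: "x \<in> Omega N r \<Longrightarrow> n \<in> {1..N} \<Longrightarrow> x n = 0 \<or> x n = 1"
  by (simp add: Omega_def)

lemma Omega_outside: "x \<in> Omega N r \<Longrightarrow> n \<notin> {1..N} \<Longrightarrow> x n = 0"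
  by (simp add: Omega_def)

lemma cyc_index_id: "n \<in> {1..N} \<Longrightarrow> cyc_index N n = n"
  by (cases "n = N") (auto simp: cyc_index_def)

lemma cyc_index_range: "N > 0 \<Longrightarrow> cyc_index N n \<in> {1..N}"
  by (simp add: cyc_index_def)

lemma card_cyc_index:
  assumes "N > 0"
  shows "card {n. n < N \<and> P (cyc_index N n)} = card {k \<in> {1..N}. P k}"
proof -
  have "bij_betw (cyc_index N) {n. n < N \<and> P (cyc_index N n)} {k \<in> {1..N}. P k}"
  proof (rule bij_betw_byWitness[where f' = "\<lambda>k. if k = N then 0 else k"])
    show "cyc_index N ` {n. n < N \<and> P (cyc_index N n)} \<subseteq> {k \<in> {1..N}. P k}"
      using cyc_index_range[OF assms] by auto
  qed (auto simp: cyc_index_def)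
  then show ?thesis by (rule bij_betw_same_card)
qed

lemma binary_diff_mod: "binary_diff N x y (n mod N) = binary_diff N x y n"
  by (simp add: binary_diff_def cyc_index_def)

lemma binary_diff_range: "binary_diff N x y n \<in> {-1, 0, 1}"
  by (simp add: binary_diff_def)

lemma card_binary_vector:
  assumes "N > 0" and "x \<in> Omega N r"
  shows "card {n. n < N \<and> x (cyc_index N n) = 1} = r"
  using assms card_cyc_index[OF assms(1), of "\<lambda>k. x k = 1"] by (simp add: Omega_def)

lemma card_binary_diff_eq_1:
  assumes "N > 0" and "x \<in> Omega N r"
  shows "card {n. n < N \<and> binary_diff N x y n = 1} \<le> r"
  unfolding card_binary_vector[OF assms, symmetric] by (intro card_mono) (auto simp: binary_diff_def)

lemma card_binary_diff_eq_minus_1: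
  assumes "N > 0" and "y \<in> Omega N r"
  shows "card {n. n < N \<and> binary_diff N x y n = -1} \<le> r"
  unfolding card_binary_vector[OF assms, symmetric] by (intro card_mono) (auto simp: binary_diff_def)

lemma sum_binary_diff:
  assumes "N > 0" and "x \<in> Omega N r" and "y \<in> Omega N r"
  shows "(\<Sum>n<N. binary_diff N x y n) = 0"
proof -
  have "(\<Sum>n<N. of_bool (v (cyc_index N n) = 1)) = int r" if "v \<in> Omega N r" for v
    using card_binary_vector[OF assms(1) that] by (simp add: Int_def)
  then show ?thesis using assms by (simp add: binary_diff_def sum_subtractf)
qed

lemma fourier_binary_diff:
  assumes N: "N > 0" and x: "x \<in> Omega N r" and y: "y \<in> Omega N r"
  shows "fourier N (binary_diff N x y) m = dft N x m - dft N y m"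
proof -
  have "of_real (x n) - of_real (y n) = (of_int (binary_diff N x y n) :: complex)" if "n \<in> {1..N}" for n
    using Omega_values[OF x that] Omega_values[OF y that] by (auto simp: binary_diff_def cyc_index_id[OF that])
  then have "dft N x m - dft N y m = (\<Sum>n = 1..N. of_int (binary_diff N x y n) * zeta N ^ (m * n))"
    unfolding dft_eq_sum_zeta sum_subtractf[symmetric] by (intro sum.cong refl) (simp add: left_diff_distrib[symmetric])
  also have "\<dots> = fourier N (binary_diff N x y) m"
    unfolding fourier_def using binary_diff_mod[of N x y N] zeta_power_eq_1_iff[OF N, of "m * N"]
    by (intro sum_atLeast1_atMost_eq_sum_lessThan) simp
  finally show ?thesis ..
qed

lemma fourier_binary_diff_0:
  assumes "N > 0" and "x \<in> Omega N r" and "y \<in> Omega N r"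
  shows "fourier N (binary_diff N x y) 0 = 0"
  using sum_binary_diff[OF assms] by (simp add: fourier_def flip: of_int_sum)

lemma eq_if_binary_diff_zero:
  assumes N: "N > 0" and x: "x \<in> Omega N r" and y: "y \<in> Omega N r"
    and zero: "\<And>n. n < N \<Longrightarrow> binary_diff N x y n = 0"
  shows "x = y"
proof
  fix n
  show "x n = y n"
  proof (cases "n \<in> {1..N}")
    case True
    have "binary_diff N x y n = 0" using zero[of "n mod N"] N by (simp add: binary_diff_mod)
    then show ?thesis using Omega_values[OF x True] Omega_values[OF y True]
      by (auto simp: binary_diff_def cyc_index_id[OF True])
  next
    case False
    then show ?thesis using Omega_outside[OF x] Omega_outside[OF y] by simp
  qed
qed

lemma binary_diff_eq_1_exists:
  assumes N: "N > 0" and x: "x \<in> Omega N r" and y: "y \<in> Omega N r" and "x \<noteq> y"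
  obtains n where "n < N" "binary_diff N x y n = 1"
proof -
  have "\<exists>n<N. binary_diff N x y n = 1"
  proof (rule ccontr)
    assume no_one: "\<not> ?thesis"
    have nonneg: "0 \<le> - binary_diff N x y n" if "n \<in> {..<N}" for n
    proof -
      have "binary_diff N x y n \<noteq> 1" using no_one that by simp
      then show ?thesis using binary_diff_range[of N x y n] by auto
    qed
    have "(\<Sum>n<N. - binary_diff N x y n) = 0" using sum_binary_diff[OF N x y] by (simp add: sum_negf)
    then have "\<forall>n\<in>{..<N}. - binary_diff N x y n = 0"
      by (subst (asm) sum_nonneg_eq_0_iff[OF finite_lessThan nonneg])
    then have "\<And>n. n < N \<Longrightarrow> binary_diff N x y n = 0" by simp
    then show False using eq_if_binary_diff_zero[OF N x y] \<open>x \<noteq> y\<close> by blast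
  qed
  then show ?thesis using that by blast
qed

lemma eq_if_fourier_binary_diff_zero:
  assumes N: "N > 0" and x: "x \<in> Omega N r" and y: "y \<in> Omega N r"
    and zero: "\<And>j. j < N \<Longrightarrow> fourier N (binary_diff N x y) j = 0"
  shows "x = y"
proof (rule eq_if_binary_diff_zero[OF N x y])
  fix n
  have "of_nat N * of_int (binary_diff N x y n) = (0 :: complex)"
    using fourier_inversion[where g = "binary_diff N x y", OF N binary_diff_mod] zero by simp
  then show "binary_diff N x y n = 0" using N by simp
qed

lemma fourier_support_multiples_imp_le_r:
  assumes N: "N = p * q" "p > 0" and x: "x \<in> Omega N r" and y: "y \<in> Omega N r" and "x \<noteq> y"
    and supp: "\<And>j. j < N \<Longrightarrow> fourier N (binary_diff N x y) j \<noteq> 0 \<Longrightarrow> q dvd j"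
  shows "q \<le> r"
proof (cases "q = 0")
  case False
  then have N0: "N > 0" using N by simp
  have shift: "binary_diff N x y (n + p) = binary_diff N x y n" for n
  proof (rule shift_invariant_if_fourier_support[where g = "binary_diff N x y", OF N0 binary_diff_mod])
    fix j assume "j < N" "fourier N (binary_diff N x y) j \<noteq> 0"
    then have "q dvd j" by (rule supp)
    then show "N dvd j * p" by (simp add: N(1) mult.commute)
  qed
  obtain n0 where "n0 < N" "binary_diff N x y n0 = 1"
    using binary_diff_eq_1_exists[OF N0 x y \<open>x \<noteq> y\<close>] by blast
  then have "q \<le> card {n. n < N \<and> binary_diff N x y n = 1}"
    by (intro card_level_set_ge_if_shift_invariant[OF N binary_diff_mod[of N x y] shift])
  also have "\<dots> \<le> r" by (rule card_binary_diff_eq_1[OF N0 x])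
  finally show ?thesis .
qed simp

lemma fourier_support_two_multiples_imp_add_le:
  assumes N: "N = p * q" and pq: "coprime p q" and x: "x \<in> Omega N r" and y: "y \<in> Omega N r"
    and "x \<noteq> y" and r: "r < p" "r < q"
    and supp: "\<And>j. j < N \<Longrightarrow> fourier N (binary_diff N x y) j \<noteq> 0 \<Longrightarrow> p dvd j \<or> q dvd j"
  shows "p + q \<le> 2 * r + 2"
proof -
  have N0: "N > 0" using N r by simp
  have second_diff: "binary_diff N x y (n + s + t) - binary_diff N x y (n + s)
      - binary_diff N x y (n + t) + binary_diff N x y n = 0" if "p dvd s" "q dvd t" for n s t
  proof (rule second_difference_zero_if_fourier_support[where g = "binary_diff N x y", OF N0 binary_diff_mod])
    fix j assume "j < N" "fourier N (binary_diff N x y) j \<noteq> 0"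
    then consider "p dvd j" | "q dvd j" using supp by blast
    then show "N dvd j * s \<or> N dvd j * t"
    proof cases
      case 1
      then have "p * q dvd j * t" using \<open>q dvd t\<close> by (rule mult_dvd_mono)
      then show ?thesis by (simp add: N)
    next
      case 2
      then have "q * p dvd j * s" using \<open>p dvd s\<close> by (rule mult_dvd_mono)
      then show ?thesis by (simp add: N mult.commute)
    qed
  qed
  obtain n1 where "n1 < N" "binary_diff N x y n1 = 1"
    using binary_diff_eq_1_exists[OF N0 x y \<open>x \<noteq> y\<close>] by blast
  then have "p + q \<le> card {n. n < N \<and> binary_diff N x y n = 1} + card {n. n < N \<and> binary_diff N x y n = -1} + 2"
    using card_binary_diff_eq_1[OF N0 x, of y] r
    by (intro second_difference_card_bound[OF N pq binary_diff_mod[of N x y] second_diff binary_diff_range]) auto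
  then show ?thesis
    using card_binary_diff_eq_1[OF N0 x, of y] card_binary_diff_eq_minus_1[OF N0 y, of x] by linarith
qed

section \<open>The case N = p q\<close>

lemma semiprime_residue_cases:
  fixes p q j :: nat
  assumes p: "prime p" and q: "prime q" and j: "0 < j" "j < p * q"
  obtains "coprime j (p * q)" | k where "j = p * k" "coprime k q" | k where "j = q * k" "coprime k p"
proof (cases "coprime j (p * q)")
  case False
  have "p dvd j \<or> q dvd j"
  proof (rule ccontr)
    assume "\<not> (p dvd j \<or> q dvd j)"
    then have "coprime (p * q) j" using prime_imp_coprime[OF p] prime_imp_coprime[OF q] by simp
    with False show False by (simp add: coprime_commute)
  qed
  moreover have "\<not> p * q dvd j" using j by (auto dest: dvd_imp_le)
  ultimately show ?thesis
  proof (elim disjE)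
    assume "p dvd j"
    then obtain k where k: "j = p * k" by blast
    then have "\<not> q dvd k" using \<open>\<not> p * q dvd j\<close> by auto
    then have "coprime k q" using prime_imp_coprime[OF q] by (simp add: coprime_commute)
    then show ?thesis by (rule that(2)[OF k])
  next
    assume "q dvd j"
    then obtain k where k: "j = q * k" by blast
    then have "\<not> p dvd k" using \<open>\<not> p * q dvd j\<close> by (auto simp: mult.commute)
    then have "coprime k p" using prime_imp_coprime[OF p] by (simp add: coprime_commute)
    then show ?thesis by (rule that(3)[OF k])
  qed
qed

lemma fourier_binary_diff_support:
  fixes p q N r L :: nat
  assumes p: "prime p" and q: "prime q" and N: "N = p * q"
    and x: "x \<in> Omega N r" and y: "y \<in> Omega N r"
    and agree: "\<And>m. 1 \<le> m \<Longrightarrow> m \<le> L \<Longrightarrow> dft N x m = dft N y m"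
    and L: "1 \<le> L" "p \<le> r \<Longrightarrow> p \<le> L" "q \<le> r \<Longrightarrow> q \<le> L"
    and j: "j < N" "fourier N (binary_diff N x y) j \<noteq> 0"
  shows "p dvd j \<and> r < p \<or> q dvd j \<and> r < q"
proof -
  let ?F = "fourier N (binary_diff N x y)"
  have N0: "N > 0" using N p q by (simp add: prime_gt_0_nat)
  have zN: "zeta N ^ N = 1" using zeta_power_eq_1_iff[OF N0] by simp
  have F_low: "?F m = 0" if "1 \<le> m" "m \<le> L" for m
    using agree[OF that] fourier_binary_diff[OF N0 x y] by simp
  have "j \<noteq> 0"
  proof
    assume "j = 0"
    then show False using j(2) fourier_binary_diff_0[OF N0 x y] by simp
  qed
  then consider "coprime j N" | k where "j = p * k" "coprime k q" | k where "j = q * k" "coprime k p"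
    using semiprime_residue_cases[OF p q] j N by blast
  then show ?thesis
  proof cases
    case 1
    then have "?F (1 * j) = 0" using F_low[of 1] L(1) zN by (intro fourier_zero_mult_coprime) auto
    then show ?thesis using j by simp
  next
    case (2 k)
    have "(zeta N ^ p) ^ q = 1" using zN by (simp add: N power_mult)
    then have "p \<le> r \<Longrightarrow> ?F (p * k) = 0"
      using F_low[of p] L(2) prime_ge_1_nat[OF p] 2(2) by (intro fourier_zero_mult_coprime) auto
    then show ?thesis using 2 j by force
  next
    case (3 k)
    have "(zeta N ^ q) ^ p = 1" using zN by (simp add: N power_mult[symmetric] mult.commute)
    then have "q \<le> r \<Longrightarrow> ?F (q * k) = 0"
      using F_low[of q] L(3) prime_ge_1_nat[OF q] 3(2) by (intro fourier_zero_mult_coprime) auto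
    then show ?thesis using 3 j by force
  qed
qed

lemma Max_divisors_le_imp_le:
  fixes p q r L l m :: nat
  assumes "Max {k. \<exists>l\<in>{0,1::nat}. \<exists>m\<in>{0,1::nat}. k = p ^ l * q ^ m \<and> k \<le> r} \<le> L"
    and "l \<in> {0, 1}" "m \<in> {0, 1}" "p ^ l * q ^ m \<le> r"
  shows "p ^ l * q ^ m \<le> L"
proof -
  let ?K = "{k. \<exists>l\<in>{0,1::nat}. \<exists>m\<in>{0,1::nat}. k = p ^ l * q ^ m \<and> k \<le> r}"
  have "finite ?K" by (rule finite_subset[of _ "{..r}"]) auto
  then have "p ^ l * q ^ m \<le> Max ?K" using assms(2-4) by (intro Max_ge) blast+
  then show ?thesis using assms(1) by linarith
qed

lemma semiprime_binary_vectors_distinguishable: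
  fixes p q N r L :: nat
  assumes p: "prime p" and q: "prime q" and "p \<le> q" and N: "N = p * q"
    and x: "x \<in> Omega N r" and y: "y \<in> Omega N r" and "x \<noteq> y"
    and L: "1 \<le> L" "p \<le> r \<Longrightarrow> p \<le> L" "q \<le> r \<Longrightarrow> q \<le> L"
  shows "\<exists>m\<in>{1..L}. dft N x m \<noteq> dft N y m"
proof (rule ccontr)
  assume "\<not> ?thesis"
  then have agree: "\<And>m. 1 \<le> m \<Longrightarrow> m \<le> L \<Longrightarrow> dft N x m = dft N y m" by auto
  have N0: "N > 0" using p q N by (simp add: prime_gt_0_nat)
  note supp = fourier_binary_diff_support[OF p q N x y agree L]
  consider "q \<le> r" | "r < q" "p \<le> r \<or> p = q" | "r < p" "p < q" using \<open>p \<le> q\<close> by linarith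
  then show False
  proof cases
    case 1
    have "x = y"
    proof (rule eq_if_fourier_binary_diff_zero[OF N0 x y])
      fix j assume "j < N"
      then show "fourier N (binary_diff N x y) j = 0" using supp 1 \<open>p \<le> q\<close> by fastforce
    qed
    then show False using \<open>x \<noteq> y\<close> by contradiction
  next
    case 2
    have "q \<le> r"
    proof (rule fourier_support_multiples_imp_le_r[OF N _ x y \<open>x \<noteq> y\<close>])
      show "p > 0" using p by (simp add: prime_gt_0_nat)
      fix j assume "j < N" "fourier N (binary_diff N x y) j \<noteq> 0"
      then show "q dvd j" using supp 2 by auto
    qed
    then show False using 2 by simp
  next
    case 3
    have "p + q \<le> 2 * r + 2"
    proof (rule fourier_support_two_multiples_imp_add_le[OF N _ x y \<open>x \<noteq> y\<close>])
      show "coprime p q" using primes_coprime[OF p q] 3 by simp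
      show "r < p" "r < q" using 3 by simp_all
      fix j assume "j < N" "fourier N (binary_diff N x y) j \<noteq> 0"
      then show "p dvd j \<or> q dvd j" using supp by auto
    qed
    then show False using 3 by simp
  qed
qed

theorem theorem2:
  fixes p q N r L :: nat
  assumes "prime p" and "prime q" and "1 < p" and "p \<le> q"
    and "N = p * q" and "odd N"
    and "0 < r" and "r \<le> (N - 1) div 2"
    and "Max {k. \<exists>l\<in>{0,1::nat}. \<exists>m\<in>{0,1::nat}. k = p ^ l * q ^ m \<and> k \<le> r} \<le> L"
    and "L \<le> (N - 1) div 2"
  shows "uniquely_solvable N r L"
proof -
  note Max_L = assms(9)
  have L: "1 \<le> L" "p \<le> r \<Longrightarrow> p \<le> L" "q \<le> r \<Longrightarrow> q \<le> L"
    using Max_divisors_le_imp_le[OF Max_L, of 0 0] Max_divisors_le_imp_le[OF Max_L, of 1 0] Max_divisors_le_imp_le[OF Max_L, of 0 1]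
      assms(7) by simp_all
  show ?thesis
    unfolding uniquely_solvable_def L_distinguishable_def
    using semiprime_binary_vectors_distinguishable[OF assms(1,2,4,5) _ _ _ L] by blast
qed

end
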